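(* Let $m(\omega)$ be a positive-integer-valued random variable, and let $j_\omega=\min\{n\in\mathbb N: m(\theta^{-n}\omega)\le n\}$. Then for every integer $k\ge0$, $\mathbb P(j_\omega>k)\le\mathbb P(m(\omega)>k)$.
   Context: $(\Omega,\mathcal F,\mathbb P,\theta)$ is the shift system of a stationary sequence indexed by $\mathbb Z$; in particular $\theta$ is invertible and preserves $\mathbb P$. ($j_\omega$ is a.s. finite; $\{j_\omega>k\}$ is understood with $j_\omega=\infty$ if no such $n$ exists.) *)

theory Defs
  imports "HOL-Probability.Probability"
begin

(* j_omega = min { n : m(theta^{-n} omega) <= n }, with value infinity if no such n exists.
   Tinv plays the role of theta^{-1}. *)
definition first_time :: "('a \<Rightarrow> nat) \<Rightarrow> ('a \<Rightarrow> 'a) \<Rightarrow> 'a \<Rightarrow> enat" where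
  "first_time m Tinv \<omega> =
     (if \<exists>n. m ((Tinv ^^ n) \<omega>) \<le> n
      then enat (LEAST n. m ((Tinv ^^ n) \<omega>) \<le> n)
      else \<infinity>)"

end

theory Submission
  imports Defs
begin

text \<open>If \<open>j\<^sub>\<omega> > k\<close> then in particular \<open>k\<close> is not admissible in the minimum defining
  \<open>j\<^sub>\<omega>\<close>, i.e. \<open>m(\<theta>\<^sup>-\<^sup>k \<omega>) > k\<close>. Hence \<open>{j > k}\<close> lies in the preimage of \<open>{m > k}\<close>
  under \<open>\<theta>\<^sup>-\<^sup>k\<close>, which has the same probability because \<open>\<theta>\<^sup>-\<^sup>1\<close> preserves \<open>\<P>\<close>.\<close>

lemma distr_funpow_eq:
  assumes "f \<in> measurable M M" and "distr M M f = M"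
  shows "distr M M (f ^^ n) = M"
proof (induction n)
  case 0
  then show ?case by (simp add: distr_id2 id_def)
next
  case (Suc n)
  have "distr M M (f ^^ Suc n) = distr (distr M M (f ^^ n)) M f"
    using distr_distr[OF assms(1) measurable_compose_n[OF assms(1)]] by simp
  also have "\<dots> = M"
    using Suc assms(2) by simp
  finally show ?case .
qed

lemma measure_preimage_eq_if_distr_eq:
  assumes "f \<in> measurable M M" and "distr M M f = M" and "A \<in> sets M"
  shows "measure M (f -` A \<inter> space M) = measure M A"
  using measure_distr[OF assms(1,3)] assms(2) by simp

lemma first_time_gt_imp_gt_at:
  assumes "enat k < first_time m Tinv \<omega>"
  shows "k < m ((Tinv ^^ k) \<omega>)"
proof (rule ccontr)
  assume "\<not> k < m ((Tinv ^^ k) \<omega>)"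
  then have admissible: "m ((Tinv ^^ k) \<omega>) \<le> k"
    by simp
  then have "(LEAST n. m ((Tinv ^^ n) \<omega>) \<le> n) \<le> k"
    by (rule Least_le)
  with admissible assms show False
    unfolding first_time_def by (auto split: if_splits)
qed

theorem lemma5p2:
  fixes M :: "'a measure" and T Tinv :: "'a \<Rightarrow> 'a" and m :: "'a \<Rightarrow> nat" and k :: nat
  assumes "prob_space M"
    and "T \<in> measurable M M" and "distr M M T = M"
    and "Tinv \<in> measurable M M" and "distr M M Tinv = M"
    and "\<And>\<omega>. \<omega> \<in> space M \<Longrightarrow> Tinv (T \<omega>) = \<omega>"
    and "\<And>\<omega>. \<omega> \<in> space M \<Longrightarrow> T (Tinv \<omega>) = \<omega>"
    and "m \<in> measurable M (count_space UNIV)"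
    and "\<And>\<omega>. \<omega> \<in> space M \<Longrightarrow> m \<omega> > 0"
  shows "measure M {\<omega> \<in> space M. first_time m Tinv \<omega> > enat k}
         \<le> measure M {\<omega> \<in> space M. m \<omega> > k}"
proof -
  interpret prob_space M by fact
  let ?F = "Tinv ^^ k" and ?A = "{\<omega> \<in> space M. m \<omega> > k}"
  have F_meas: "?F \<in> measurable M M"
    using assms(4) by (rule measurable_compose_n)
  have "?A = m -` {k<..} \<inter> space M"
    by auto
  then have A_sets: "?A \<in> sets M"
    using measurable_sets[OF assms(8)] by simp
  have "{\<omega> \<in> space M. first_time m Tinv \<omega> > enat k} \<subseteq> ?F -` ?A \<inter> space M"
    using first_time_gt_imp_gt_at[of k m Tinv] measurable_space[OF F_meas] by auto
  then have "measure M {\<omega> \<in> space M. first_time m Tinv \<omega> > enat k}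
             \<le> measure M (?F -` ?A \<inter> space M)"
    using measurable_sets[OF F_meas A_sets] by (rule finite_measure_mono)
  also have "\<dots> = measure M ?A"
    using F_meas distr_funpow_eq[OF assms(4,5)] A_sets
    by (rule measure_preimage_eq_if_distr_eq)
  finally show ?thesis .
qed

end
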